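(* Let $D$ be an oriented graph and let $u$ be a vertex of $D$ of maximum score. Then every vertex $v \neq u$ of $D$ is weakly reachable within two steps from $u$.
   Context: An oriented graph is a digraph with no loops and no pair of symmetric arcs. For vertices $u,v$ write $u(1\text{-}0)v$ if there is an arc from $u$ to $v$, $u(0\text{-}1)v$ if there is an arc from $v$ to $u$, and $u(0\text{-}0)v$ if there is no arc between $u$ and $v$. If $D$ has $n$ vertices, the score of a vertex $v$ is $s(v) = n-1+d^+(v)-d^-(v)$, where $d^+(v), d^-(v)$ are the out- and indegree of $v$; equivalently $s(v)=2d^+(v)+d^*(v)$ where $d^*(v)$ is the number of vertices $w$ with $v(0\text{-}0)w$. A vertex $v$ is weakly reachable within two steps from $u$ if $u(1\text{-}0)v$, or $u(0\text{-}0)v$, or for some vertex $w$ one has $u(1\text{-}0)w(1\text{-}0)v$, or $u(1\text{-}0)w(0\text{-}0)v$, or $u(0\text{-}0)w(1\text{-}0)v$. *)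

theory Defs
  imports Main
begin

definition oriented_graph :: "'a set \<Rightarrow> ('a \<Rightarrow> 'a \<Rightarrow> bool) \<Rightarrow> bool" where
  "oriented_graph V A \<longleftrightarrow> finite V \<and> (\<forall>u v. A u v \<longrightarrow> u \<in> V \<and> v \<in> V)
     \<and> (\<forall>u. \<not> A u u) \<and> (\<forall>u v. A u v \<longrightarrow> \<not> A v u)"

definition outdeg :: "'a set \<Rightarrow> ('a \<Rightarrow> 'a \<Rightarrow> bool) \<Rightarrow> 'a \<Rightarrow> nat" where
  "outdeg V A v = card {w \<in> V. A v w}"

definition indeg :: "'a set \<Rightarrow> ('a \<Rightarrow> 'a \<Rightarrow> bool) \<Rightarrow> 'a \<Rightarrow> nat" where
  "indeg V A v = card {w \<in> V. A w v}"

definition score :: "'a set \<Rightarrow> ('a \<Rightarrow> 'a \<Rightarrow> bool) \<Rightarrow> 'a \<Rightarrow> int" where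
  "score V A v = int (card V) - 1 + int (outdeg V A v) - int (indeg V A v)"

definition nonadj :: "'a set \<Rightarrow> ('a \<Rightarrow> 'a \<Rightarrow> bool) \<Rightarrow> 'a \<Rightarrow> 'a \<Rightarrow> bool" where
  "nonadj V A u v \<longleftrightarrow> u \<in> V \<and> v \<in> V \<and> u \<noteq> v \<and> \<not> A u v \<and> \<not> A v u"

definition weakly_reachable2 :: "'a set \<Rightarrow> ('a \<Rightarrow> 'a \<Rightarrow> bool) \<Rightarrow> 'a \<Rightarrow> 'a \<Rightarrow> bool" where
  "weakly_reachable2 V A u v \<longleftrightarrow> A u v \<or> nonadj V A u v \<or>
     (\<exists>w\<in>V. (A u w \<and> A w v) \<or> (A u w \<and> nonadj V A w v) \<or> (nonadj V A u w \<and> A w v))"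

end

theory Submission
  imports Defs
begin

text \<open>If v is not weakly reachable within two steps from u, then v beats u, every
  out-neighbour of u is an out-neighbour of v, and every in-neighbour of v is an
  in-neighbour of u. Since u is an out-neighbour of v but not of itself (and v an
  in-neighbour of u but not of itself), v has strictly larger outdegree and strictly
  smaller indegree than u, hence strictly larger score.\<close>

lemma outdeg_less_if_dominated:
  assumes "oriented_graph V A" and "A v u"
    and "\<And>w. A u w \<Longrightarrow> A v w"
  shows "outdeg V A u < outdeg V A v"
proof -
  have "{w \<in> V. A u w} \<subset> {w \<in> V. A v w}"
    using assms unfolding oriented_graph_def by blast
  then show ?thesis
    using assms(1) unfolding outdeg_def oriented_graph_def by (simp add: psubset_card_mono)
qed

lemma indeg_less_if_dominated:
  assumes "oriented_graph V A" and "A v u"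
    and "\<And>w. A w v \<Longrightarrow> A w u"
  shows "indeg V A v < indeg V A u"
proof -
  have "{w \<in> V. A w v} \<subset> {w \<in> V. A w u}"
    using assms unfolding oriented_graph_def by blast
  then show ?thesis
    using assms(1) unfolding indeg_def oriented_graph_def by (simp add: psubset_card_mono)
qed

lemma score_less_if_dominated:
  assumes "oriented_graph V A" and "A v u"
    and "\<And>w. A u w \<Longrightarrow> A v w" and "\<And>w. A w v \<Longrightarrow> A w u"
  shows "score V A u < score V A v"
  using outdeg_less_if_dominated[OF assms(1,2,3)] indeg_less_if_dominated[OF assms(1,2,4)]
  unfolding score_def by simp

lemma dominated_if_not_weakly_reachable2:
  assumes G: "oriented_graph V A" and "u \<in> V" "v \<in> V" "u \<noteq> v"
    and not_reach: "\<not> weakly_reachable2 V A u v"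
  shows "A v u" and "\<And>w. A u w \<Longrightarrow> A v w" and "\<And>w. A w v \<Longrightarrow> A w u"
proof -
  have inV: "\<And>a b. A a b \<Longrightarrow> a \<in> V \<and> b \<in> V"
    and irrefl: "\<And>a. \<not> A a a" and asym: "\<And>a b. A a b \<Longrightarrow> \<not> A b a"
    using G unfolding oriented_graph_def by blast+
  show vu: "A v u"
    using assms unfolding weakly_reachable2_def nonadj_def by blast
  show out: "A v w" if "A u w" for w
    using that not_reach inV[OF that] assms(2-4) vu irrefl asym
    unfolding weakly_reachable2_def nonadj_def by metis
  show "A w u" if "A w v" for w
    using that not_reach inV[OF that] assms(2) vu asym out
    unfolding weakly_reachable2_def nonadj_def by metis
qed

theorem theorem4:
  fixes V :: "'a set" and A :: "'a \<Rightarrow> 'a \<Rightarrow> bool" and u :: 'a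
  assumes "oriented_graph V A"
    and "u \<in> V"
    and "\<forall>x\<in>V. score V A x \<le> score V A u"
  shows "\<forall>v\<in>V. v \<noteq> u \<longrightarrow> weakly_reachable2 V A u v"
proof (intro ballI impI)
  fix v assume "v \<in> V" and "v \<noteq> u"
  show "weakly_reachable2 V A u v"
  proof (rule ccontr)
    assume "\<not> weakly_reachable2 V A u v"
    then have "score V A u < score V A v"
      using dominated_if_not_weakly_reachable2[OF assms(1,2) \<open>v \<in> V\<close>] \<open>v \<noteq> u\<close>
      by (intro score_less_if_dominated[OF assms(1)]) auto
    then show False using assms(3) \<open>v \<in> V\<close> by fastforce
  qed
qed

end
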